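(* Let $K$ be a field, $S=K[x_1,\ldots,x_n]$, and let $I\subset S$ be a monomial ideal minimally generated by $q$ monomials $m_1,\ldots,m_q$. Label each vertex $\ell_{i,j}$ ($1\le i\le j\le q$) of the simplicial complex $\mathbb{M}_q^2$ by the monomial $m_im_j$. Then: (a) $\mathbb{M}_q^2$ supports a free resolution of $I^2$; (b) $\mathbb{M}^2(I)$ supports a free resolution of $I^2$.
   Context: Simplicial complexes: a simplicial complex on a vertex set is a collection of subsets closed under taking subsets; $\langle F_1,\ldots,F_r\rangle$ denotes the complex whose facets (maximal faces) are $F_1,\ldots,F_r$. Definition of $\mathbb{M}_q^2$: take the vertex set $V=\{\ell_{i,j}: 1\le i\le j\le q\}$, let $\mathcal{M}=\{\ell_{i,j}:1\le i<j\le q\}$ and $\mathcal{M}_i=\mathcal{M}\cup\{\ell_{i,i}\}$ for $i\in[q]$. Then $\mathbb{M}_q^2=\langle \mathcal{M}_1,\ldots,\mathcal{M}_q\rangle$. We write $\ell_{j,i}=\ell_{i,j}$. Definition of $\mathbb{M}^2(I)$: label each vertex $\ell_{i,j}$ of $\mathbb{M}_q^2$ with $m_im_j$. For any indices $i,j,u,v\in[q]$ with $\{i,j\}\ne\{u,v\}$ such that $m_im_j\mid m_um_v$: if $m_im_j=m_um_v$ and $i=\min\{i,j,u,v\}$, delete the vertex $\ell_{i,j}$; if $m_im_j\neq m_um_v$, delete the vertex $\ell_{u,v}$. $\mathbb{M}^2(I)$ is the induced subcomplex of $\mathbb{M}_q^2$ on the remaining vertices, with each face labeled by the lcm of the labels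 of its vertices. Supporting a free resolution: given a simplicial complex $\Delta$ whose vertices are labeled by monomials generating an ideal $J$, label each face $\tau$ by $m_\tau=\operatorname{lcm}$ of its vertex labels. $\Delta$ supports a free resolution of $J$ if the homogenization of the (augmented) simplicial chain complex of $\Delta$ with respect to these labels (in the sense of Bayer–Peeva–Sturmfels: the free module in homological degree $i$ has a basis indexed by the $i$-dimensional faces $\tau$, in multidegree $m_\tau$, with differential $\tau\mapsto\sum \pm (m_\tau/m_{\tau\setminus v})\,(\tau\setminus v)$) is a free resolution of $J$. *)

theory Defs
  imports Main "HOL-Library.Poly_Mapping" "HOL-Library.Product_Lexorder"
begin

text \<open>Monomials in x_1..x_n are exponent vectors (variable x_(i+1) has index i);
  polynomials over K are finitely supported maps from monomials to K.  The ring S = K[x_1..x_n] is the set of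
  polynomials all of whose monomials only involve the indices 0..n-1.\<close>

type_synonym mon = "nat \<Rightarrow>\<^sub>0 nat"
type_synonym 'k pol = "mon \<Rightarrow>\<^sub>0 'k"

definition mon_in :: "nat \<Rightarrow> mon \<Rightarrow> bool" where
  "mon_in n a \<longleftrightarrow> Poly_Mapping.keys a \<subseteq> {..<n}"

definition inS :: "nat \<Rightarrow> 'k::zero pol \<Rightarrow> bool" where
  "inS n p \<longleftrightarrow> (\<forall>a\<in>Poly_Mapping.keys p. mon_in n a)"

definition xmon :: "mon \<Rightarrow> 'k::{zero,one} pol" where
  "xmon a = Poly_Mapping.single a 1"

definition mdvd :: "mon \<Rightarrow> mon \<Rightarrow> bool" where
  "mdvd a b \<longleftrightarrow> (\<forall>i. Poly_Mapping.lookup a i \<le> Poly_Mapping.lookup b i)"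

definition mlcm :: "mon set \<Rightarrow> mon" where
  "mlcm A = Abs_poly_mapping (\<lambda>i. Max (insert 0 ((\<lambda>a. Poly_Mapping.lookup a i) ` A)))"

definition mdiff :: "mon \<Rightarrow> mon \<Rightarrow> mon" where
  "mdiff a b = Abs_poly_mapping (\<lambda>i. Poly_Mapping.lookup a i - Poly_Mapping.lookup b i)"

definition ideal_span :: "nat \<Rightarrow> 'k::comm_ring_1 pol set \<Rightarrow> 'k pol set" where
  "ideal_span n G = {p. \<exists>A c. finite A \<and> A \<subseteq> G \<and> (\<forall>g\<in>A. inS n (c g)) \<and> p = (\<Sum>g\<in>A. c g * g)}"

definition ideal_prod :: "nat \<Rightarrow> 'k::comm_ring_1 pol set \<Rightarrow> 'k pol set \<Rightarrow> 'k pol set" where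
  "ideal_prod n I J = ideal_span n {a * b | a b. a \<in> I \<and> b \<in> J}"

text \<open>A simplicial complex is a set of
  finite vertex sets (faces, the empty face included).  Faces with k vertices span the free
  module in homological degree k-1 (the empty face gives the copy of S in degree -1).
  A chain of size k is a function from faces of size k to S.  The vertex order of the type
  'v is used for the orientation signs.\<close>

definition face_label :: "('v \<Rightarrow> mon) \<Rightarrow> 'v set \<Rightarrow> mon" where
  "face_label lab \<tau> = mlcm (lab ` \<tau>)"

definition bsign :: "'v::linorder \<Rightarrow> 'v set \<Rightarrow> 'k::comm_ring_1" where
  "bsign v \<tau> = (-1) ^ card {w\<in>\<tau>. w < v}"

definition faces_card :: "'v set set \<Rightarrow> nat \<Rightarrow> 'v set set" where
  "faces_card \<Delta> k = {\<tau>\<in>\<Delta>. card \<tau> = k}"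

definition is_chain :: "'v set set \<Rightarrow> nat \<Rightarrow> nat \<Rightarrow> ('v set \<Rightarrow> 'k::zero pol) \<Rightarrow> bool" where
  "is_chain \<Delta> n k c \<longleftrightarrow> (\<forall>\<tau>. c \<tau> \<noteq> 0 \<longrightarrow> \<tau> \<in> faces_card \<Delta> k) \<and> (\<forall>\<tau>. inS n (c \<tau>))"

definition hbd :: "'v::linorder set set \<Rightarrow> ('v \<Rightarrow> mon) \<Rightarrow> nat \<Rightarrow> ('v set \<Rightarrow> 'k::comm_ring_1 pol)
                     \<Rightarrow> 'v set \<Rightarrow> 'k pol" where
  "hbd \<Delta> lab k c \<sigma> = (\<Sum>\<tau>\<in>faces_card \<Delta> k. \<Sum>v\<in>\<tau>.
       if \<tau> - {v} = \<sigma>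
       then bsign v \<tau> * xmon (mdiff (face_label lab \<tau>) (face_label lab \<sigma>)) * c \<tau>
       else 0)"

text \<open>\<Delta> with labels lab supports a free resolution of the ideal J of S = K[x_1..x_n]:
  the homogenized complex  ... \<rightarrow> F_1 \<rightarrow> F_0  is exact (in every homological degree \<ge> 0)
  and the image of F_0 \<rightarrow> S is J.\<close>
definition supports_free_resolution ::
  "nat \<Rightarrow> 'v::linorder set set \<Rightarrow> ('v \<Rightarrow> mon) \<Rightarrow> 'k::comm_ring_1 pol set \<Rightarrow> bool" where
  "supports_free_resolution n \<Delta> lab J \<longleftrightarrow>
     (\<forall>k\<ge>1. \<forall>c::'v set \<Rightarrow> 'k pol. is_chain \<Delta> n k c \<and> hbd \<Delta> lab k c = (\<lambda>_. 0) \<longrightarrow>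
         (\<exists>e. is_chain \<Delta> n (Suc k) e \<and> hbd \<Delta> lab (Suc k) e = c))
   \<and> {hbd \<Delta> lab 1 c {} | c. is_chain \<Delta> n 1 c} = J"

text \<open>The complex M_q^2: vertex l_{i,j} (1 \<le> i \<le> j \<le> q) is the pair (i,j).\<close>
definition lv :: "nat \<Rightarrow> nat \<Rightarrow> nat \<times> nat" where
  "lv i j = (min i j, max i j)"

definition Mset :: "nat \<Rightarrow> (nat \<times> nat) set" where
  "Mset q = {lv i j | i j. 1 \<le> i \<and> i < j \<and> j \<le> q}"

definition Mfacet :: "nat \<Rightarrow> nat \<Rightarrow> (nat \<times> nat) set" where
  "Mfacet q i = Mset q \<union> {lv i i}"

definition Mq2 :: "nat \<Rightarrow> (nat \<times> nat) set set" where
  "Mq2 q = {\<tau>. \<exists>i\<in>{1..q}. \<tau> \<subseteq> Mfacet q i}"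

definition Mlab :: "(nat \<Rightarrow> mon) \<Rightarrow> nat \<times> nat \<Rightarrow> mon" where
  "Mlab m v = m (fst v) + m (snd v)"

definition deleted :: "nat \<Rightarrow> (nat \<Rightarrow> mon) \<Rightarrow> (nat \<times> nat) set" where
  "deleted q m =
     {lv i j | i j u v. i \<in> {1..q} \<and> j \<in> {1..q} \<and> u \<in> {1..q} \<and> v \<in> {1..q} \<and> {i,j} \<noteq> {u,v}
        \<and> mdvd (m i + m j) (m u + m v) \<and> m i + m j = m u + m v \<and> i = Min {i,j,u,v}}
   \<union> {lv u v | i j u v. i \<in> {1..q} \<and> j \<in> {1..q} \<and> u \<in> {1..q} \<and> v \<in> {1..q} \<and> {i,j} \<noteq> {u,v}
        \<and> mdvd (m i + m j) (m u + m v) \<and> m i + m j \<noteq> m u + m v}"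

definition M2I :: "nat \<Rightarrow> (nat \<Rightarrow> mon) \<Rightarrow> (nat \<times> nat) set set" where
  "M2I q m = {\<tau> \<in> Mq2 q. \<tau> \<inter> deleted q m = {}}"

end

theory Submission
  imports Defs
begin

text \<open>In each multidegree \<open>g\<close> the homogenized chain complex of a labelled complex is the
  ordinary simplicial chain complex, over \<open>'k\<close>, of the subcomplex of faces whose label divides \<open>g\<close>.
  So the complex supports a resolution as soon as each of these subcomplexes is \<open>{{}}\<close> or a cone,
  since adding the apex contracts a cone.  In \<open>M_q^2\<close>, with any set of vertices removed, all
  edge vertices \<open>l_{i,j}\<close> (\<open>i < j\<close>) lie in every facet: the subcomplex below \<open>g\<close> is a cone over
  any surviving edge vertex whose label divides \<open>g\<close>, and otherwise it has at most one vertex, as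
  long as \<open>m_i^2 | g\<close> and \<open>m_j^2 | g\<close> (\<open>i \<noteq> j\<close>) always yield a surviving edge vertex below \<open>g\<close>.
  For \<open>M^2(I)\<close> this and the generation of \<open>I^2\<close> follow by descent on the degree of \<open>m_i m_j\<close>:
  every deleted vertex lies over a surviving one, and a surviving diagonal vertex \<open>l_{k,k}\<close> below
  \<open>m_x m_y\<close> yields a smaller pair \<open>(x, k)\<close> or \<open>(y, k)\<close>.\<close>

abbreviation (input) lookup where "lookup \<equiv> Poly_Mapping.lookup"
abbreviation (input) keys where "keys \<equiv> Poly_Mapping.keys"

subsection \<open>Monomials\<close>

lemma mdvd_refl [simp]: "mdvd a a"
  by (simp add: mdvd_def)

lemma mdvd_trans: "mdvd a b \<Longrightarrow> mdvd b c \<Longrightarrow> mdvd a c"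
  unfolding mdvd_def using order_trans by blast

lemma mdvd_antisym: "mdvd a b \<Longrightarrow> mdvd b a \<Longrightarrow> a = b"
  unfolding mdvd_def by (intro poly_mapping_eqI) (simp add: order_antisym)

lemma mdvd_triv_left [simp]: "mdvd a (a + b)"
  by (simp add: mdvd_def lookup_add)

lemma mdvd_triv_right [simp]: "mdvd a (b + a)"
  by (simp add: mdvd_def lookup_add)

lemma mdvd_add_diff_inverse: "mdvd a b \<Longrightarrow> a + (b - a) = b"
  by (intro poly_mapping_eqI) (simp add: mdvd_def lookup_add lookup_minus)

lemma mdvd_add_if_doubles: "mdvd (a + a) g \<Longrightarrow> mdvd (b + b) g \<Longrightarrow> mdvd (a + b) g"
  unfolding mdvd_def lookup_add
proof
  fix i
  assume "\<forall>i. lookup a i + lookup a i \<le> lookup g i" "\<forall>i. lookup b i + lookup b i \<le> lookup g i"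
  then have "lookup a i + lookup a i \<le> lookup g i" "lookup b i + lookup b i \<le> lookup g i"
    by blast+
  then show "lookup a i + lookup b i \<le> lookup g i"
    by linarith
qed

lemma mdvd_cancel_double: "mdvd (a + a) (a + b) \<Longrightarrow> mdvd a b"
  by (simp add: mdvd_def lookup_add)

lemma mdiff_eq_minus: "mdiff a b = a - b"
  unfolding mdiff_def by (simp flip: lookup_minus add: lookup_inverse)

lemma mon_in_iff: "mon_in n a \<longleftrightarrow> (\<forall>i\<ge>n. lookup a i = 0)"
  unfolding mon_in_def by (meson in_keys_iff lessThan_iff not_le subset_iff)

lemma mon_in_add_iff [simp]: "mon_in n (a + b) \<longleftrightarrow> mon_in n a \<and> mon_in n b"
  by (auto simp: mon_in_iff lookup_add)

lemma mon_in_minus: "mon_in n a \<Longrightarrow> mon_in n (a - b)"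
  by (simp add: mon_in_iff lookup_minus)

lemma lookup_mlcm:
  assumes "finite A"
  shows "lookup (mlcm A) i = Max (insert 0 ((\<lambda>a. lookup a i) ` A))"
proof -
  have "{i. Max (insert 0 ((\<lambda>a. lookup a i) ` A)) \<noteq> 0} \<subseteq> (\<Union>a\<in>A. keys a)"
    using assms by (auto simp: in_keys_iff Max_eq_iff)
  then have "finite {i. Max (insert 0 ((\<lambda>a. lookup a i) ` A)) \<noteq> 0}"
    by (rule finite_subset) (simp add: assms)
  then show ?thesis
    unfolding mlcm_def by simp
qed

lemma face_label_mdvd_iff:
  "finite \<tau> \<Longrightarrow> mdvd (face_label lab \<tau>) g \<longleftrightarrow> (\<forall>v\<in>\<tau>. mdvd (lab v) g)"
  by (auto simp: face_label_def mdvd_def lookup_mlcm)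

lemma face_label_mono:
  "finite \<tau> \<Longrightarrow> \<sigma> \<subseteq> \<tau> \<Longrightarrow> mdvd (face_label lab \<sigma>) (face_label lab \<tau>)"
  by (metis face_label_mdvd_iff finite_subset mdvd_refl subsetD)

lemma face_label_empty [simp]: "face_label lab {} = 0"
  by (intro poly_mapping_eqI) (simp add: face_label_def lookup_mlcm)

lemma face_label_singleton [simp]: "face_label lab {v} = lab v"
  by (intro poly_mapping_eqI) (simp add: face_label_def lookup_mlcm)

lemma mon_in_face_label:
  "finite \<tau> \<Longrightarrow> \<forall>v\<in>\<tau>. mon_in n (lab v) \<Longrightarrow> mon_in n (face_label lab \<tau>)"
  by (auto simp: mon_in_iff face_label_def lookup_mlcm Max_eq_iff)

definition mdeg :: "mon \<Rightarrow> nat" where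
  "mdeg a = (\<Sum>i\<in>keys a. lookup a i)"

lemma mdeg_eq_sum: "finite K \<Longrightarrow> keys a \<subseteq> K \<Longrightarrow> mdeg a = (\<Sum>i\<in>K. lookup a i)"
  unfolding mdeg_def by (rule sum.mono_neutral_left) (auto simp: in_keys_iff)

lemma mdeg_add: "mdeg (a + b) = mdeg a + mdeg b"
proof -
  let ?K = "keys a \<union> keys b"
  have "keys (a + b) \<subseteq> ?K"
    by (rule keys_add)
  then show ?thesis
    by (simp add: mdeg_eq_sum[of ?K] lookup_add sum.distrib)
qed

lemma keys_mono_mdvd: "mdvd a b \<Longrightarrow> keys a \<subseteq> keys b"
  unfolding mdvd_def by (metis in_keys_iff le_zero_eq subsetI)

lemma mdeg_mono:
  assumes "mdvd a b"
  shows "mdeg a \<le> mdeg b"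
proof -
  have "mdeg a = (\<Sum>i\<in>keys b. lookup a i)"
    using assms by (simp add: mdeg_eq_sum keys_mono_mdvd)
  also have "\<dots> \<le> mdeg b"
    unfolding mdeg_def using assms by (intro sum_mono) (simp add: mdvd_def)
  finally show ?thesis .
qed

lemma mdeg_strict_mono:
  assumes "mdvd a b" "a \<noteq> b"
  shows "mdeg a < mdeg b"
proof -
  obtain i where "lookup a i \<noteq> lookup b i"
    using assms(2) by (meson poly_mapping_eqI)
  with assms(1) have "lookup a i < lookup b i"
    unfolding mdvd_def by (simp add: order.strict_iff_order)
  then have i: "lookup a i < lookup b i" "i \<in> keys b"
    by (simp_all add: in_keys_iff)
  have "mdeg a = (\<Sum>i\<in>keys b. lookup a i)"
    using assms by (simp add: mdeg_eq_sum keys_mono_mdvd)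
  also have "\<dots> < mdeg b"
    unfolding mdeg_def using assms(1) i by (intro sum_strict_mono_ex1) (auto simp: mdvd_def)
  finally show ?thesis .
qed

lemma mdvd_mdeg_eq: "mdvd a b \<Longrightarrow> mdeg a = mdeg b \<Longrightarrow> a = b"
  using mdeg_strict_mono by fastforce

subsection \<open>Polynomials and ideals\<close>

lemma lookup_xmon_mult:
  fixes p :: "'k::comm_ring_1 pol"
  shows "lookup (xmon d * p) b = (if mdvd d b then lookup p (b - d) else 0)"
proof -
  have "lookup (xmon d * p) b = (\<Sum>l. lookup (xmon d :: 'k pol) l * (\<Sum>q. lookup p q when b = l + q))"
    by (rule lookup_mult)
  also have "\<dots> = (\<Sum>l. (\<Sum>q. lookup p q when b = l + q) when d = l)"
    unfolding xmon_def lookup_single by (simp add: when_mult)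
  also have "\<dots> = (\<Sum>q. lookup p q when b = d + q)"
    by (simp add: when_def)
  also have "\<dots> = (if mdvd d b then lookup p (b - d) else 0)"
  proof (cases "mdvd d b")
    case True
    then have "b = d + q \<longleftrightarrow> q = b - d" for q
      using mdvd_add_diff_inverse by auto
    with True show ?thesis
      by simp
  next
    case False
    then have "b \<noteq> d + q" for q
      by auto
    with False show ?thesis
      by (simp add: when_def)
  qed
  finally show ?thesis .
qed

lemma xmon_mult: "(xmon a :: 'k::comm_ring_1 pol) * xmon b = xmon (a + b)"
  by (simp add: xmon_def mult_single)

lemma inS_zero [simp]: "inS n 0"
  by (simp add: inS_def)

lemma inS_one: "inS n (1 :: 'k::comm_ring_1 pol)"
  by (simp add: inS_def mon_in_def)

lemma inS_add: "inS n p \<Longrightarrow> inS n q \<Longrightarrow> inS n (p + q)"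
  unfolding inS_def by (meson UnE keys_add subsetD)

lemma inS_mult:
  assumes "inS n p" "inS n q"
  shows "inS n (p * q)"
  unfolding inS_def
proof
  fix a
  assume "a \<in> keys (p * q)"
  then obtain b c where "a = b + c" "b \<in> keys p" "c \<in> keys q"
    using keys_mult by blast
  with assms show "mon_in n a"
    by (simp add: inS_def)
qed

lemma inS_xmon: "mon_in n a \<Longrightarrow> inS n (xmon a :: 'k::zero_neq_one pol)"
  by (simp add: inS_def xmon_def)

lemma ideal_span_zero: "0 \<in> ideal_span n G"
  unfolding ideal_span_def by (auto intro!: exI[of _ "{}"])

lemma ideal_span_gen: "g \<in> G \<Longrightarrow> g \<in> ideal_span n (G :: 'k::comm_ring_1 pol set)"
  unfolding ideal_span_def by (auto intro!: exI[of _ "{g}"] exI[of _ "\<lambda>_. 1"] simp: inS_one)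

lemma ideal_span_add:
  assumes "p \<in> ideal_span n G" "q \<in> ideal_span n G"
  shows "p + q \<in> ideal_span n (G :: 'k::comm_ring_1 pol set)"
proof -
  obtain A c where A: "finite A" "A \<subseteq> G" "\<forall>g\<in>A. inS n (c g)" "p = (\<Sum>g\<in>A. c g * g)"
    using assms(1) unfolding ideal_span_def by blast
  obtain B d where B: "finite B" "B \<subseteq> G" "\<forall>g\<in>B. inS n (d g)" "q = (\<Sum>g\<in>B. d g * g)"
    using assms(2) unfolding ideal_span_def by blast
  define e where "e g = (if g \<in> A then c g else 0) + (if g \<in> B then d g else 0)" for g
  have "p = (\<Sum>g\<in>A \<union> B. (if g \<in> A then c g else 0) * g)"
    unfolding A(4) using A(1) B(1) by (intro sum.mono_neutral_cong_left) auto
  moreover have "q = (\<Sum>g\<in>A \<union> B. (if g \<in> B then d g else 0) * g)"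
    unfolding B(4) using A(1) B(1) by (intro sum.mono_neutral_cong_left) auto
  ultimately have "p + q = (\<Sum>g\<in>A \<union> B. e g * g)"
    unfolding e_def distrib_right sum.distrib by simp
  moreover have "\<forall>g\<in>A \<union> B. inS n (e g)"
    unfolding e_def using A(3) B(3) by (intro ballI inS_add) auto
  ultimately show ?thesis
    unfolding ideal_span_def using A(1,2) B(1,2) by (intro CollectI exI[of _ "A \<union> B"] exI[of _ e]) simp
qed

lemma ideal_span_mult:
  assumes "inS n s" "p \<in> ideal_span n G"
  shows "s * p \<in> ideal_span n (G :: 'k::comm_ring_1 pol set)"
proof -
  obtain A c where A: "finite A" "A \<subseteq> G" "\<forall>g\<in>A. inS n (c g)" "p = (\<Sum>g\<in>A. c g * g)"
    using assms(2) unfolding ideal_span_def by blast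
  have "s * p = (\<Sum>g\<in>A. (s * c g) * g)"
    unfolding A(4) by (simp add: sum_distrib_left mult.assoc)
  moreover have "\<forall>g\<in>A. inS n (s * c g)"
    using A(3) assms(1) by (simp add: inS_mult)
  ultimately show ?thesis
    unfolding ideal_span_def using A(1,2) by (intro CollectI exI[of _ A] exI[of _ "\<lambda>g. s * c g"]) simp
qed

lemma ideal_span_sum:
  "finite A \<Longrightarrow> (\<And>x. x \<in> A \<Longrightarrow> f x \<in> ideal_span n G) \<Longrightarrow> sum f A \<in> ideal_span n (G :: 'k::comm_ring_1 pol set)"
  by (induction A rule: finite_induct) (simp_all add: ideal_span_zero ideal_span_add)

lemma ideal_span_least:
  fixes G :: "'k::comm_ring_1 pol set"
  assumes "0 \<in> M" "\<And>x y. x \<in> M \<Longrightarrow> y \<in> M \<Longrightarrow> x + y \<in> M"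
    and "\<And>s x. inS n s \<Longrightarrow> x \<in> M \<Longrightarrow> s * x \<in> M" and "G \<subseteq> M"
  shows "ideal_span n G \<subseteq> M"
proof
  fix p
  assume "p \<in> ideal_span n G"
  then obtain A c where A: "finite A" "A \<subseteq> G" "\<forall>g\<in>A. inS n (c g)" "p = (\<Sum>g\<in>A. c g * g)"
    unfolding ideal_span_def by blast
  have "(\<Sum>g\<in>B. c g * g) \<in> M" if "finite B" "B \<subseteq> A" for B
    using that by (induction B rule: finite_induct) (use A assms in auto)
  with A show "p \<in> M"
    by blast
qed

lemma ideal_span_times:
  fixes G H K :: "'k::comm_ring_1 pol set"
  assumes gens: "\<And>g h. g \<in> G \<Longrightarrow> h \<in> H \<Longrightarrow> g * h \<in> ideal_span n K"
    and "a \<in> ideal_span n G" "b \<in> ideal_span n H"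
  shows "a * b \<in> ideal_span n K"
proof -
  have right: "ideal_span n H \<subseteq> {y. x * y \<in> ideal_span n K}" if "x \<in> G" for x
    by (rule ideal_span_least)
      (use gens that in \<open>auto simp: distrib_left mult.left_commute
         intro: ideal_span_zero ideal_span_add ideal_span_mult\<close>)
  have "ideal_span n G \<subseteq> {x. \<forall>y\<in>ideal_span n H. x * y \<in> ideal_span n K}"
    by (rule ideal_span_least)
      (use right in \<open>auto simp: distrib_right mult.assoc
         intro: ideal_span_zero ideal_span_add ideal_span_mult\<close>)
  with assms(2,3) show ?thesis
    by blast
qed

lemma ideal_prod_ideal_span:
  fixes G H :: "'k::comm_ring_1 pol set"
  shows "ideal_prod n (ideal_span n G) (ideal_span n H) = ideal_span n {g * h | g h. g \<in> G \<and> h \<in> H}"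
    (is "_ = ideal_span n ?K")
proof
  have prod: "a * b \<in> ideal_span n ?K" if "a \<in> ideal_span n G" "b \<in> ideal_span n H" for a b
    by (rule ideal_span_times[OF _ that]) (blast intro: ideal_span_gen)
  show "ideal_prod n (ideal_span n G) (ideal_span n H) \<subseteq> ideal_span n ?K"
    unfolding ideal_prod_def
    by (rule ideal_span_least[OF ideal_span_zero ideal_span_add ideal_span_mult]) (auto intro: prod)
  have gens: "g * h \<in> ideal_prod n (ideal_span n G) (ideal_span n H)" if "g \<in> G" "h \<in> H" for g h
    unfolding ideal_prod_def using that by (blast intro: ideal_span_gen)
  show "ideal_span n ?K \<subseteq> ideal_prod n (ideal_span n G) (ideal_span n H)"
    unfolding ideal_prod_def
    by (rule ideal_span_least[OF ideal_span_zero ideal_span_add ideal_span_mult])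
      (auto intro: gens[unfolded ideal_prod_def])
qed

lemma ideal_span_xmon_subset:
  assumes "\<And>a. a \<in> A \<Longrightarrow> mon_in n a \<and> (\<exists>b\<in>B. mdvd b a)"
  shows "ideal_span n (xmon ` A :: 'k::comm_ring_1 pol set) \<subseteq> ideal_span n (xmon ` B)"
proof -
  have gen: "xmon a \<in> ideal_span n (xmon ` B :: 'k pol set)" if "a \<in> A" for a
  proof -
    obtain b where b: "b \<in> B" "mdvd b a" "mon_in n a"
      using assms[OF \<open>a \<in> A\<close>] by blast
    then have "xmon a = xmon (a - b) * (xmon b :: 'k pol)"
      by (simp add: xmon_mult add.commute mdvd_add_diff_inverse)
    moreover have "inS n (xmon (a - b) :: 'k pol)"
      using b(3) by (simp add: mon_in_minus inS_xmon)
    ultimately show ?thesis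
      using b(1) by (simp add: ideal_span_mult ideal_span_gen)
  qed
  show ?thesis
    by (intro ideal_span_least[OF ideal_span_zero ideal_span_add ideal_span_mult] image_subsetI gen)
qed

lemma ideal_prod_monomial_ideal:
  "ideal_prod n (ideal_span n ((\<lambda>i. xmon (m i)) ` Q)) (ideal_span n ((\<lambda>i. xmon (m i)) ` Q))
     = ideal_span n (xmon ` {m i + m j | i j. i \<in> Q \<and> j \<in> Q} :: 'k::comm_ring_1 pol set)"
proof -
  have "{g * h | g h. g \<in> (\<lambda>i. xmon (m i)) ` Q \<and> h \<in> (\<lambda>i. xmon (m i)) ` Q}
      = (xmon ` {m i + m j | i j. i \<in> Q \<and> j \<in> Q} :: 'k pol set)"
    by (auto simp: xmon_mult) (blast, metis image_eqI xmon_mult)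
  then show ?thesis
    by (simp add: ideal_prod_ideal_span)
qed

lemma ideal_span_finite_image:
  fixes f :: "'a \<Rightarrow> 'k::comm_ring_1 pol"
  assumes "finite F"
  shows "ideal_span n (f ` F) = {\<Sum>x\<in>F. c x * f x | c. \<forall>x. inS n (c x)}" (is "_ = ?R")
proof
  show "?R \<subseteq> ideal_span n (f ` F)"
  proof
    fix p
    assume "p \<in> ?R"
    then obtain c where "p = (\<Sum>x\<in>F. c x * f x)" "\<forall>x. inS n (c x)"
      by blast
    then show "p \<in> ideal_span n (f ` F)"
      using assms by (simp add: ideal_span_sum ideal_span_mult ideal_span_gen)
  qed
  show "ideal_span n (f ` F) \<subseteq> ?R"
  proof (rule ideal_span_least)
    show "0 \<in> ?R"
      by (auto intro!: exI[of _ "\<lambda>_. 0"])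
    show "p + q \<in> ?R" if pq: "p \<in> ?R" "q \<in> ?R" for p q
    proof -
      obtain c d where "p = (\<Sum>x\<in>F. c x * f x)" "q = (\<Sum>x\<in>F. d x * f x)" "\<forall>x. inS n (c x)" "\<forall>x. inS n (d x)"
        using pq by blast
      then show ?thesis
        by (auto simp: distrib_right sum.distrib intro!: exI[of _ "\<lambda>x. c x + d x"] inS_add)
    qed
    show "s * p \<in> ?R" if sp: "inS n s" "p \<in> ?R" for s p
    proof -
      obtain c where "p = (\<Sum>x\<in>F. c x * f x)" "\<forall>x. inS n (c x)"
        using sp(2) by blast
      with sp(1) show ?thesis
        by (auto simp: sum_distrib_left mult.assoc intro!: exI[of _ "\<lambda>x. s * c x"] inS_mult)
    qed
    show "f ` F \<subseteq> ?R"
    proof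
      fix p
      assume "p \<in> f ` F"
      then obtain y where "y \<in> F" "p = f y"
        by blast
      then have "p = (\<Sum>x\<in>F. (if x = y then 1 else 0) * f x)"
        using assms by (simp add: if_distrib[where f = "\<lambda>c. c * _"] sum.delta' cong: if_cong)
      then show "p \<in> ?R"
        by (auto simp: inS_one intro!: exI[of _ "\<lambda>x. if x = y then 1 else 0"])
    qed
  qed
qed

subsection \<open>The homogenized chain complex\<close>

lemma lookup_bsign_mult: "lookup ((bsign v \<tau> :: 'k::comm_ring_1 pol) * p) b = bsign v \<tau> * lookup p b"
proof -
  have "lookup ((-1) ^ j * p) b = (-1) ^ j * lookup p b" for j
    by (induction j) auto
  then show ?thesis
    by (simp add: bsign_def)
qed

lemma mdvd_minus_iff:
  assumes "mdvd s t" "mdvd s g"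
  shows "mdvd (t - s) (g - s) \<longleftrightarrow> mdvd t g"
proof -
  have "lookup s i \<le> lookup t i" "lookup s i \<le> lookup g i" for i
    using assms by (simp_all add: mdvd_def)
  then show ?thesis
    by (simp add: mdvd_def lookup_minus le_diff_iff)
qed

lemma diff_diff_mdvd: "mdvd s t \<Longrightarrow> g - s - (t - s) = g - t"
  unfolding mdvd_def by (intro poly_mapping_eqI) (simp add: lookup_minus)

text \<open>The basis element \<open>\<tau>\<close> lives in multidegree \<open>face_label lab \<tau>\<close>, so the coefficient of \<open>\<tau>\<close>
  in the multidegree-\<open>g\<close> component of a chain \<open>c\<close> is that of \<open>x^(g - face_label lab \<tau>)\<close> in \<open>c \<tau>\<close>.\<close>

definition graded_coeff :: "('v \<Rightarrow> mon) \<Rightarrow> ('v set \<Rightarrow> 'k::comm_ring_1 pol) \<Rightarrow> mon \<Rightarrow> 'v set \<Rightarrow> 'k" where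
  "graded_coeff lab c g \<tau> =
     (if mdvd (face_label lab \<tau>) g then lookup (c \<tau>) (g - face_label lab \<tau>) else 0)"

definition plain_bd :: "'v::linorder set set \<Rightarrow> nat \<Rightarrow> ('v set \<Rightarrow> 'k::comm_ring_1) \<Rightarrow> 'v set \<Rightarrow> 'k" where
  "plain_bd \<Delta> k z \<sigma> = (\<Sum>\<tau>\<in>faces_card \<Delta> k. \<Sum>v\<in>\<tau>. if \<tau> - {v} = \<sigma> then bsign v \<tau> * z \<tau> else 0)"

lemma graded_coeff_nonzeroD:
  "graded_coeff lab c g \<tau> \<noteq> 0 \<Longrightarrow> c \<tau> \<noteq> 0 \<and> mdvd (face_label lab \<tau>) g"
  by (auto simp: graded_coeff_def split: if_splits)

lemma poly_eq_if_graded_coeff_eq: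
  assumes "\<And>g. graded_coeff lab c g \<sigma> = graded_coeff lab e g \<sigma>"
  shows "c \<sigma> = e \<sigma>"
proof (rule poly_mapping_eqI)
  fix \<alpha>
  show "lookup (c \<sigma>) \<alpha> = lookup (e \<sigma>) \<alpha>"
    using assms[of "\<alpha> + face_label lab \<sigma>"] by (simp add: graded_coeff_def)
qed

lemma graded_coeff_hbd:
  assumes "\<forall>\<tau>\<in>\<Delta>. finite \<tau>"
  shows "graded_coeff lab (hbd \<Delta> lab k c) g \<sigma> = plain_bd \<Delta> k (graded_coeff lab c g) \<sigma>"
proof -
  have below: "mdvd (face_label lab \<sigma>) (face_label lab \<tau>)"
    if "\<tau> \<in> faces_card \<Delta> k" "\<tau> - {v} = \<sigma>" for \<tau> v
    using that assms by (auto simp: faces_card_def intro: face_label_mono)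
  show ?thesis
  proof (cases "mdvd (face_label lab \<sigma>) g")
    case True
    have "lookup (hbd \<Delta> lab k c \<sigma>) (g - face_label lab \<sigma>) = plain_bd \<Delta> k (graded_coeff lab c g) \<sigma>"
      unfolding hbd_def plain_bd_def lookup_sum
    proof (intro sum.cong refl)
      fix \<tau> v
      assume \<tau>: "\<tau> \<in> faces_card \<Delta> k"
      show "lookup (if \<tau> - {v} = \<sigma>
            then bsign v \<tau> * xmon (mdiff (face_label lab \<tau>) (face_label lab \<sigma>)) * c \<tau> else 0)
            (g - face_label lab \<sigma>)
          = (if \<tau> - {v} = \<sigma> then bsign v \<tau> * graded_coeff lab c g \<tau> else 0)"
      proof (cases "\<tau> - {v} = \<sigma>")
        case face: True
        with below[OF \<tau>] have "mdvd (face_label lab \<sigma>) (face_label lab \<tau>)"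
          by blast
        with True face show ?thesis
          by (simp add: mult.assoc lookup_bsign_mult lookup_xmon_mult mdiff_eq_minus graded_coeff_def
              mdvd_minus_iff diff_diff_mdvd)
      qed simp
    qed
    with True show ?thesis
      by (simp add: graded_coeff_def)
  next
    case False
    have "graded_coeff lab c g \<tau> = 0" if "\<tau> \<in> faces_card \<Delta> k" "\<tau> - {v} = \<sigma>" for \<tau> v
    proof -
      have "\<not> mdvd (face_label lab \<tau>) g"
        using below[OF that] False mdvd_trans by blast
      then show ?thesis
        by (simp add: graded_coeff_def)
    qed
    then have "plain_bd \<Delta> k (graded_coeff lab c g) \<sigma> = 0"
      unfolding plain_bd_def by (intro sum.neutral ballI) simp
    with False show ?thesis
      by (simp add: graded_coeff_def)
  qed
qed

lemma graded_coeff_support: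
  assumes "finite \<Delta>" "\<forall>\<tau>\<in>\<Delta>. finite \<tau> \<and> (\<forall>v\<in>\<tau>. mon_in n (lab v))" "is_chain \<Delta> n k c"
  obtains G where "finite G" "\<forall>g\<in>G. mon_in n g" "\<And>g \<tau>. graded_coeff lab c g \<tau> \<noteq> 0 \<Longrightarrow> g \<in> G"
proof
  let ?G = "\<Union>\<tau>\<in>\<Delta>. (\<lambda>\<beta>. \<beta> + face_label lab \<tau>) ` keys (c \<tau>)"
  show "finite ?G"
    using assms(1) by simp
  show "\<forall>g\<in>?G. mon_in n g"
    using assms(2,3) by (auto simp: is_chain_def inS_def intro: mon_in_face_label)
  fix g \<tau>
  assume nz: "graded_coeff lab c g \<tau> \<noteq> 0"
  with assms(3) have "\<tau> \<in> \<Delta>"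
    by (auto simp: is_chain_def faces_card_def dest: graded_coeff_nonzeroD)
  moreover from nz have "g - face_label lab \<tau> \<in> keys (c \<tau>)" "g = (g - face_label lab \<tau>) + face_label lab \<tau>"
    by (auto simp: graded_coeff_def in_keys_iff add.commute mdvd_add_diff_inverse split: if_splits)
  ultimately show "g \<in> ?G"
    by blast
qed

lemma chain_from_graded_coeffs:
  fixes W :: "mon \<Rightarrow> 'v set \<Rightarrow> 'k::comm_ring_1"
  assumes "finite G" "\<forall>g\<in>G. mon_in n g"
    and W: "\<And>g \<tau>. W g \<tau> \<noteq> 0 \<Longrightarrow> g \<in> G \<and> \<tau> \<in> faces_card \<Delta> k \<and> mdvd (face_label lab \<tau>) g"
  obtains e where "is_chain \<Delta> n k e" "\<And>g \<tau>. graded_coeff lab e g \<tau> = W g \<tau>"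
proof
  define e where "e \<tau> = Abs_poly_mapping (\<lambda>\<alpha>. W (\<alpha> + face_label lab \<tau>) \<tau>)" for \<tau>
  have "{\<alpha>. W (\<alpha> + face_label lab \<tau>) \<tau> \<noteq> 0} \<subseteq> (\<lambda>\<alpha>. \<alpha> + face_label lab \<tau>) -` G" for \<tau>
    using W by blast
  moreover have "finite ((\<lambda>\<alpha>. \<alpha> + face_label lab \<tau>) -` G)" for \<tau>
    using assms(1) by (rule finite_vimageI) (simp add: inj_on_def)
  ultimately have lookup_e: "lookup (e \<tau>) \<alpha> = W (\<alpha> + face_label lab \<tau>) \<tau>" for \<tau> \<alpha>
    unfolding e_def by (subst lookup_Abs_poly_mapping) (auto intro: finite_subset)
  show "graded_coeff lab e g \<tau> = W g \<tau>" for g \<tau>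
    using W[of g \<tau>] by (auto simp: graded_coeff_def lookup_e add.commute mdvd_add_diff_inverse)
  show "is_chain \<Delta> n k e"
    unfolding is_chain_def inS_def
  proof (intro conjI allI impI ballI)
    fix \<tau>
    assume "e \<tau> \<noteq> 0"
    then obtain \<alpha> where "W (\<alpha> + face_label lab \<tau>) \<tau> \<noteq> 0"
      by (metis lookup_e lookup_zero poly_mapping_eqI)
    with W show "\<tau> \<in> faces_card \<Delta> k"
      by blast
  next
    fix \<tau> \<alpha>
    assume "\<alpha> \<in> keys (e \<tau>)"
    then have "\<alpha> + face_label lab \<tau> \<in> G"
      using W by (simp add: in_keys_iff lookup_e)
    with assms(2) show "mon_in n \<alpha>"
      using mon_in_add_iff by blast
  qed
qed

definition insert_bd :: "'v::linorder set \<Rightarrow> ('v set \<Rightarrow> 'k::comm_ring_1) \<Rightarrow> 'v set \<Rightarrow> 'k" where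
  "insert_bd V z \<sigma> = (\<Sum>v\<in>V - \<sigma>. bsign v (insert v \<sigma>) * z (insert v \<sigma>))"

definition cone_chain :: "'v::linorder \<Rightarrow> ('v set \<Rightarrow> 'k::comm_ring_1) \<Rightarrow> 'v set \<Rightarrow> 'k" where
  "cone_chain a z \<tau> = (if a \<in> \<tau> then bsign a \<tau> * z (\<tau> - {a}) else 0)"

definition is_cone_point :: "'v set set \<Rightarrow> 'v \<Rightarrow> bool" where
  "is_cone_point K a \<longleftrightarrow> (\<forall>\<tau>\<in>K. insert a \<tau> \<in> K)"

lemma plain_bd_eq_insert_bd:
  fixes z :: "'v::linorder set \<Rightarrow> 'k::comm_ring_1"
  assumes V: "finite V" "\<Delta> \<subseteq> Pow V" and supp: "\<And>\<tau>. z \<tau> \<noteq> 0 \<Longrightarrow> \<tau> \<in> faces_card \<Delta> k"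
  shows "plain_bd \<Delta> k z \<sigma> = insert_bd V z \<sigma>"
proof -
  let ?F = "faces_card \<Delta> k"
  let ?t = "\<lambda>v \<tau>. if \<tau> = insert v \<sigma> \<and> v \<notin> \<sigma> then bsign v \<tau> * z \<tau> else 0"
  have "finite ?F"
    using V by (auto simp: faces_card_def intro: finite_subset[of _ "Pow V"])
  have "plain_bd \<Delta> k z \<sigma> = (\<Sum>\<tau>\<in>?F. \<Sum>v\<in>V. ?t v \<tau>)"
    unfolding plain_bd_def
  proof (rule sum.cong[OF refl])
    fix \<tau>
    assume "\<tau> \<in> ?F"
    with V have "\<tau> \<subseteq> V"
      by (auto simp: faces_card_def)
    with V(1) show "(\<Sum>v\<in>\<tau>. if \<tau> - {v} = \<sigma> then bsign v \<tau> * z \<tau> else 0) = (\<Sum>v\<in>V. ?t v \<tau>)"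
      by (intro sum.mono_neutral_cong_left) auto
  qed
  also have "\<dots> = (\<Sum>v\<in>V. \<Sum>\<tau>\<in>?F. ?t v \<tau>)"
    by (rule sum.swap)
  also have "\<dots> = (\<Sum>v\<in>V - \<sigma>. bsign v (insert v \<sigma>) * z (insert v \<sigma>))"
  proof (rule sum.mono_neutral_cong_right)
    fix v
    assume "v \<in> V - \<sigma>"
    moreover have "z (insert v \<sigma>) = 0" if "insert v \<sigma> \<notin> ?F"
      using supp that by blast
    ultimately show "(\<Sum>\<tau>\<in>?F. ?t v \<tau>) = bsign v (insert v \<sigma>) * z (insert v \<sigma>)"
      using \<open>finite ?F\<close> by (auto simp: sum.delta')
  qed (use V(1) in auto)
  finally show ?thesis
    unfolding insert_bd_def .
qed

lemma bsign_square [simp]: "(bsign v \<tau> :: 'k::comm_ring_1) * bsign v \<tau> = 1"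
  by (simp add: bsign_def flip: power_add mult_2)

lemma bsign_singleton [simp]: "bsign u {u} = (1 :: 'k::comm_ring_1)"
proof -
  have "{w \<in> {u}. w < u} = {}"
    by auto
  then show ?thesis
    unfolding bsign_def by (simp only: card.empty power_0)
qed

lemma bsign_insert_swap:
  fixes a v :: "'v::linorder"
  assumes "finite \<sigma>" "a \<in> \<sigma>" "v \<notin> \<sigma>"
  shows "(bsign v (insert v \<sigma>) :: 'k::comm_ring_1) * bsign a (insert v \<sigma>)
       = - (bsign a \<sigma> * bsign v (insert v (\<sigma> - {a})))"
proof (cases "a < v")
  case True
  with assms have "{w\<in>insert v \<sigma>. w < v} = insert a {w\<in>insert v (\<sigma> - {a}). w < v}"
    "{w\<in>insert v \<sigma>. w < a} = {w\<in>\<sigma>. w < a}"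
    by auto
  with assms show ?thesis
    by (simp add: bsign_def)
next
  case False
  with assms have "v < a"
    by (metis linorder_neqE)
  with assms have "{w\<in>insert v \<sigma>. w < v} = {w\<in>insert v (\<sigma> - {a}). w < v}"
    "{w\<in>insert v \<sigma>. w < a} = insert v {w\<in>\<sigma>. w < a}"
    by auto
  with assms show ?thesis
    by (simp add: bsign_def)
qed

text \<open>Coning off with apex \<open>a\<close> is a contracting homotopy; \<open>insert_bd\<close> is the boundary written as
  a sum over the vertices that extend a face (see \<open>plain_bd_eq_insert_bd\<close>).\<close>

lemma insert_bd_cone_chain:
  fixes z :: "'v::linorder set \<Rightarrow> 'k::comm_ring_1"
  assumes "finite V" "a \<in> V" "finite \<sigma>"
  shows "insert_bd V (cone_chain a z) \<sigma> + cone_chain a (insert_bd V z) \<sigma> = z \<sigma>"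
proof (cases "a \<in> \<sigma>")
  case False
  then have "insert_bd V (cone_chain a z) \<sigma>
      = (\<Sum>v\<in>V - \<sigma>. if v = a then bsign a (insert a \<sigma>) * (bsign a (insert a \<sigma>) * z \<sigma>) else 0)"
    unfolding insert_bd_def cone_chain_def by (intro sum.cong refl) auto
  with assms False show ?thesis
    by (simp add: cone_chain_def sum.delta' mult.assoc[symmetric])
next
  case True
  let ?s = "\<sigma> - {a}"
  have "V - ?s = insert a (V - \<sigma>)" "a \<notin> V - \<sigma>" "insert a ?s = \<sigma>"
    using True assms(2) by auto
  then have "cone_chain a (insert_bd V z) \<sigma>
      = bsign a \<sigma> * (bsign a \<sigma> * z \<sigma> + (\<Sum>v\<in>V - \<sigma>. bsign v (insert v ?s) * z (insert v ?s)))"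
    using True assms(1) by (simp add: cone_chain_def insert_bd_def)
  also have "\<dots> = z \<sigma> + (\<Sum>v\<in>V - \<sigma>. bsign a \<sigma> * (bsign v (insert v ?s) * z (insert v ?s)))"
    by (simp add: distrib_left sum_distrib_left mult.assoc[symmetric])
  also have "\<dots> = z \<sigma> - insert_bd V (cone_chain a z) \<sigma>"
    unfolding insert_bd_def cone_chain_def diff_conv_add_uminus sum_negf[symmetric]
  proof (intro arg_cong2[where f = "(+)"] refl sum.cong)
    fix v
    assume "v \<in> V - \<sigma>"
    then have "insert v \<sigma> - {a} = insert v ?s" "v \<notin> \<sigma>"
      using True by auto
    with assms(3) True show "bsign a \<sigma> * (bsign v (insert v ?s) * z (insert v ?s))
        = - (bsign v (insert v \<sigma>) * (if a \<in> insert v \<sigma> then bsign a (insert v \<sigma>) * z (insert v \<sigma> - {a}) else 0))"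
      by (simp add: mult.assoc[symmetric] bsign_insert_swap)
  qed
  finally show ?thesis
    by simp
qed

lemma cone_chain_support:
  assumes "\<forall>\<tau>\<in>K. finite \<tau>" "is_cone_point K a" and supp: "\<And>\<tau>. z \<tau> \<noteq> 0 \<Longrightarrow> \<tau> \<in> faces_card K k"
    and "cone_chain a z \<tau> \<noteq> 0"
  shows "\<tau> \<in> faces_card K (Suc k)"
proof -
  from assms(4) have "a \<in> \<tau>" "z (\<tau> - {a}) \<noteq> 0"
    by (auto simp: cone_chain_def split: if_splits)
  then have "\<tau> - {a} \<in> K" "card (\<tau> - {a}) = k" "finite \<tau>"
    using supp[of "\<tau> - {a}"] assms(1) by (auto simp: faces_card_def)
  moreover have "insert a (\<tau> - {a}) = \<tau>"
    using \<open>a \<in> \<tau>\<close> by blast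
  ultimately show ?thesis
    using assms(2) \<open>a \<in> \<tau>\<close> card_Suc_Diff1 by (fastforce simp: faces_card_def is_cone_point_def)
qed

lemma insert_bd_cone_chain_cycle:
  fixes z :: "'v::linorder set \<Rightarrow> 'k::comm_ring_1"
  assumes "finite V" "a \<in> V" and fin: "\<And>\<tau>. z \<tau> \<noteq> 0 \<Longrightarrow> finite \<tau>"
    and cycle: "insert_bd V z = (\<lambda>_. 0)"
  shows "insert_bd V (cone_chain a z) \<sigma> = z \<sigma>"
proof (cases "finite \<sigma>")
  case True
  have "cone_chain a (insert_bd V z) \<sigma> = 0"
    by (simp add: cycle cone_chain_def)
  with insert_bd_cone_chain[OF assms(1,2) True, of z] show ?thesis
    by simp
next
  case False
  have "z \<tau> = 0" if "infinite \<tau>" for \<tau>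
    using fin that by blast
  with False have "z \<sigma> = 0" "cone_chain a z (insert v \<sigma>) = 0" for v
    by (simp_all add: cone_chain_def)
  then show ?thesis
    by (simp add: insert_bd_def)
qed

lemma cycle_is_boundary_in_cone:
  fixes z :: "'v::linorder set \<Rightarrow> 'k::comm_ring_1"
  assumes V: "finite V" "K \<subseteq> Pow V" and cone: "\<exists>\<tau>\<in>K. \<tau> \<noteq> {} \<Longrightarrow> \<exists>a. is_cone_point K a"
    and "1 \<le> k" and supp: "\<And>\<tau>. z \<tau> \<noteq> 0 \<Longrightarrow> \<tau> \<in> faces_card K k"
    and cycle: "insert_bd V z = (\<lambda>_. 0)"
  obtains w where "\<And>\<tau>. w \<tau> \<noteq> 0 \<Longrightarrow> \<tau> \<in> faces_card K (Suc k)" "insert_bd V w = z"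
    "z = (\<lambda>_. 0) \<Longrightarrow> w = (\<lambda>_. 0)"
proof (cases "z = (\<lambda>_. 0)")
  case True
  moreover have "insert_bd V (\<lambda>_. 0 :: 'k) = (\<lambda>_. 0)"
    by (simp add: insert_bd_def fun_eq_iff)
  ultimately show ?thesis
    using that[of "\<lambda>_. 0"] by simp
next
  case False
  then obtain \<tau>\<^sub>0 where "z \<tau>\<^sub>0 \<noteq> 0"
    by blast
  then have "\<tau>\<^sub>0 \<in> K" "card \<tau>\<^sub>0 = k"
    using supp by (auto simp: faces_card_def)
  with \<open>1 \<le> k\<close> have "\<tau>\<^sub>0 \<noteq> {}"
    by auto
  then obtain a where a: "is_cone_point K a"
    using cone \<open>\<tau>\<^sub>0 \<in> K\<close> by blast
  then have "a \<in> V"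
    using \<open>\<tau>\<^sub>0 \<in> K\<close> V(2) by (auto simp: is_cone_point_def)
  have fin: "\<forall>\<tau>\<in>K. finite \<tau>"
    using V by (auto intro: finite_subset)
  then have "finite \<tau>" if "z \<tau> \<noteq> 0" for \<tau>
    using supp[OF that] by (auto simp: faces_card_def)
  then have "insert_bd V (cone_chain a z) \<sigma> = z \<sigma>" for \<sigma>
    using insert_bd_cone_chain_cycle[OF V(1) \<open>a \<in> V\<close> _ cycle] by blast
  then have "insert_bd V (cone_chain a z) = z"
    by (intro ext)
  with cone_chain_support[OF fin a supp] that False show ?thesis
    by blast
qed

definition faces_below :: "'v set set \<Rightarrow> ('v \<Rightarrow> mon) \<Rightarrow> mon \<Rightarrow> 'v set set" where
  "faces_below \<Delta> lab g = {\<tau> \<in> \<Delta>. mdvd (face_label lab \<tau>) g}"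

lemma graded_coeff_hbd_eq_insert_bd:
  assumes V: "finite V" "\<Delta> \<subseteq> Pow V" and supp: "\<And>\<tau>. c \<tau> \<noteq> 0 \<Longrightarrow> \<tau> \<in> faces_card \<Delta> k"
  shows "graded_coeff lab (hbd \<Delta> lab k c) g \<sigma> = insert_bd V (graded_coeff lab c g) \<sigma>"
proof -
  have "\<forall>\<tau>\<in>\<Delta>. finite \<tau>"
    using V by (auto intro: finite_subset)
  then have "graded_coeff lab (hbd \<Delta> lab k c) g \<sigma> = plain_bd \<Delta> k (graded_coeff lab c g) \<sigma>"
    by (rule graded_coeff_hbd)
  also have "\<dots> = insert_bd V (graded_coeff lab c g) \<sigma>"
    using supp by (intro plain_bd_eq_insert_bd V) (blast dest: graded_coeff_nonzeroD)
  finally show ?thesis .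
qed

lemma graded_boundaries_in_cones:
  fixes \<Delta> :: "'v::linorder set set" and c :: "'v set \<Rightarrow> 'k::comm_ring_1 pol"
  assumes V: "finite V" "\<Delta> \<subseteq> Pow V"
    and cones: "\<And>g. \<exists>\<tau>\<in>faces_below \<Delta> lab g. \<tau> \<noteq> {} \<Longrightarrow> \<exists>a. is_cone_point (faces_below \<Delta> lab g) a"
    and "1 \<le> k" and chain: "is_chain \<Delta> n k c" and cycle: "hbd \<Delta> lab k c = (\<lambda>_. 0)"
  obtains W where "\<And>g \<tau>. W g \<tau> \<noteq> 0 \<Longrightarrow> \<tau> \<in> faces_card (faces_below \<Delta> lab g) (Suc k)"
    "\<And>g. insert_bd V (W g) = graded_coeff lab c g" "\<And>g. graded_coeff lab c g = (\<lambda>_. 0) \<Longrightarrow> W g = (\<lambda>_. 0)"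
proof -
  have supp: "graded_coeff lab c g \<tau> \<noteq> 0 \<Longrightarrow> \<tau> \<in> faces_card (faces_below \<Delta> lab g) k" for g \<tau>
    using chain by (auto simp: is_chain_def faces_card_def faces_below_def dest: graded_coeff_nonzeroD)
  have "insert_bd V (graded_coeff lab c g) \<sigma> = 0" for g \<sigma>
  proof -
    have "insert_bd V (graded_coeff lab c g) \<sigma> = graded_coeff lab (hbd \<Delta> lab k c) g \<sigma>"
      using chain by (intro graded_coeff_hbd_eq_insert_bd[OF V, symmetric]) (simp add: is_chain_def)
    also have "\<dots> = 0"
      by (simp add: cycle graded_coeff_def)
    finally show ?thesis .
  qed
  then have "insert_bd V (graded_coeff lab c g) = (\<lambda>_. 0)" for g
    by (intro ext)
  moreover have "faces_below \<Delta> lab g \<subseteq> Pow V" for g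
    using V(2) by (auto simp: faces_below_def)
  ultimately have "\<forall>g. \<exists>w. (\<forall>\<tau>. w \<tau> \<noteq> 0 \<longrightarrow> \<tau> \<in> faces_card (faces_below \<Delta> lab g) (Suc k))
      \<and> insert_bd V w = graded_coeff lab c g \<and> (graded_coeff lab c g = (\<lambda>_. 0) \<longrightarrow> w = (\<lambda>_. 0))"
    by (metis cycle_is_boundary_in_cone[OF V(1) _ cones \<open>1 \<le> k\<close> supp])
  then show ?thesis
    using that by metis
qed

lemma hbd_exact_if_cones:
  fixes \<Delta> :: "'v::linorder set set" and c :: "'v set \<Rightarrow> 'k::comm_ring_1 pol"
  assumes V: "finite V" "\<Delta> \<subseteq> Pow V" and labels: "\<forall>v\<in>V. mon_in n (lab v)"
    and cones: "\<And>g. \<exists>\<tau>\<in>faces_below \<Delta> lab g. \<tau> \<noteq> {} \<Longrightarrow> \<exists>a. is_cone_point (faces_below \<Delta> lab g) a"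
    and "1 \<le> k" and chain: "is_chain \<Delta> n k c" and cycle: "hbd \<Delta> lab k c = (\<lambda>_. 0)"
  shows "\<exists>e. is_chain \<Delta> n (Suc k) e \<and> hbd \<Delta> lab (Suc k) e = c"
proof -
  obtain W where W: "\<And>g \<tau>. W g \<tau> \<noteq> 0 \<Longrightarrow> \<tau> \<in> faces_card (faces_below \<Delta> lab g) (Suc k)"
    "\<And>g. insert_bd V (W g) = graded_coeff lab c g" "\<And>g. graded_coeff lab c g = (\<lambda>_. 0) \<Longrightarrow> W g = (\<lambda>_. 0)"
    using graded_boundaries_in_cones[OF V cones \<open>1 \<le> k\<close> chain cycle] by blast
  have "finite \<Delta>" "\<forall>\<tau>\<in>\<Delta>. finite \<tau> \<and> (\<forall>v\<in>\<tau>. mon_in n (lab v))"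
    using V labels by (auto intro: finite_subset)
  then obtain G where G: "finite G" "\<forall>g\<in>G. mon_in n g" "\<And>g \<tau>. graded_coeff lab c g \<tau> \<noteq> 0 \<Longrightarrow> g \<in> G"
    using graded_coeff_support chain by metis
  have "g \<in> G" if "W g \<tau> \<noteq> 0" for g \<tau>
  proof (rule ccontr)
    assume "g \<notin> G"
    then have "graded_coeff lab c g = (\<lambda>_. 0)"
      using G(3) by blast
    with W(3) that show False
      by simp
  qed
  moreover have "\<tau> \<in> faces_card \<Delta> (Suc k) \<and> mdvd (face_label lab \<tau>) g" if "W g \<tau> \<noteq> 0" for g \<tau>
    using W(1)[OF that] by (auto simp: faces_card_def faces_below_def)
  ultimately have W_supp: "\<And>g \<tau>. W g \<tau> \<noteq> 0 \<Longrightarrow> g \<in> G \<and> \<tau> \<in> faces_card \<Delta> (Suc k) \<and> mdvd (face_label lab \<tau>) g"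
    by blast
  obtain e where e: "is_chain \<Delta> n (Suc k) e" "\<And>g \<tau>. graded_coeff lab e g \<tau> = W g \<tau>"
    using chain_from_graded_coeffs[OF G(1,2) W_supp] by blast
  have "hbd \<Delta> lab (Suc k) e \<sigma> = c \<sigma>" for \<sigma>
  proof (rule poly_eq_if_graded_coeff_eq)
    fix g
    have "graded_coeff lab (hbd \<Delta> lab (Suc k) e) g \<sigma> = insert_bd V (graded_coeff lab e g) \<sigma>"
      using e(1) by (intro graded_coeff_hbd_eq_insert_bd[OF V]) (simp add: is_chain_def)
    also have "graded_coeff lab e g = W g"
      by (intro ext e(2))
    finally show "graded_coeff lab (hbd \<Delta> lab (Suc k) e) g \<sigma> = graded_coeff lab c g \<sigma>"
      by (simp add: W(2))
  qed
  with e(1) show ?thesis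
    by blast
qed

lemma hbd_1_empty:
  "hbd \<Delta> lab 1 c {} = (\<Sum>\<tau>\<in>faces_card \<Delta> 1. xmon (face_label lab \<tau>) * (c \<tau> :: 'k::comm_ring_1 pol))"
  unfolding hbd_def
proof (rule sum.cong[OF refl])
  fix \<tau> :: "'a set"
  assume "\<tau> \<in> faces_card \<Delta> 1"
  then obtain u where "\<tau> = {u}"
    by (auto simp: faces_card_def card_1_singleton_iff)
  then show "(\<Sum>v\<in>\<tau>. if \<tau> - {v} = {}
      then bsign v \<tau> * xmon (mdiff (face_label lab \<tau>) (face_label lab {})) * c \<tau> else 0)
      = xmon (face_label lab \<tau>) * c \<tau>"
    by (simp add: mdiff_eq_minus)
qed

lemma augmentation_image:
  fixes \<Delta> :: "'v::linorder set set"
  assumes "finite \<Delta>"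
  shows "{hbd \<Delta> lab 1 c {} | c :: 'v set \<Rightarrow> 'k::comm_ring_1 pol. is_chain \<Delta> n 1 c}
    = ideal_span n (xmon ` lab ` {v. {v} \<in> \<Delta>})"
proof -
  let ?F = "faces_card \<Delta> 1" and ?f = "\<lambda>\<tau>. xmon (face_label lab \<tau>) :: 'k pol"
  have "?F = (\<lambda>v. {v}) ` {v. {v} \<in> \<Delta>}"
    by (auto simp: faces_card_def card_1_singleton_iff)
  then have "xmon ` lab ` {v. {v} \<in> \<Delta>} = ?f ` ?F"
    by (simp add: image_image)
  moreover have "finite ?F"
    using assms by (simp add: faces_card_def)
  moreover have "{hbd \<Delta> lab 1 c {} | c. is_chain \<Delta> n 1 c} = {\<Sum>\<tau>\<in>?F. c \<tau> * ?f \<tau> | c. \<forall>\<tau>. inS n (c \<tau>)}"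
  proof (intro equalityI subsetI)
    fix p :: "'k pol"
    assume "p \<in> {hbd \<Delta> lab 1 c {} | c. is_chain \<Delta> n 1 c}"
    then obtain c where c: "p = hbd \<Delta> lab 1 c {}" "is_chain \<Delta> n 1 c"
      by blast
    have "p = (\<Sum>\<tau>\<in>?F. c \<tau> * ?f \<tau>)"
      unfolding c(1) hbd_1_empty by (simp add: mult.commute)
    moreover have "\<forall>\<tau>. inS n (c \<tau>)"
      using c(2) by (simp add: is_chain_def)
    ultimately show "p \<in> {\<Sum>\<tau>\<in>?F. c \<tau> * ?f \<tau> | c. \<forall>\<tau>. inS n (c \<tau>)}"
      by blast
  next
    fix p :: "'k pol"
    assume "p \<in> {\<Sum>\<tau>\<in>?F. c \<tau> * ?f \<tau> | c. \<forall>\<tau>. inS n (c \<tau>)}"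
    then obtain c where c: "p = (\<Sum>\<tau>\<in>?F. c \<tau> * ?f \<tau>)" "\<forall>\<tau>. inS n (c \<tau>)"
      by blast
    define c' where "c' \<tau> = (if \<tau> \<in> ?F then c \<tau> else 0)" for \<tau>
    have "is_chain \<Delta> n 1 c'"
      using c(2) by (simp add: is_chain_def c'_def)
    moreover have "p = hbd \<Delta> lab 1 c' {}"
      unfolding c(1) hbd_1_empty by (rule sum.cong) (simp_all add: c'_def mult.commute)
    ultimately show "p \<in> {hbd \<Delta> lab 1 c {} | c. is_chain \<Delta> n 1 c}"
      by blast
  qed
  ultimately show ?thesis
    by (simp add: ideal_span_finite_image)
qed

lemma supports_free_resolution_if_cones:
  fixes \<Delta> :: "'v::linorder set set"
  assumes "finite V" "\<Delta> \<subseteq> Pow V" "\<forall>v\<in>V. mon_in n (lab v)"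
    and "\<And>g. \<exists>\<tau>\<in>faces_below \<Delta> lab g. \<tau> \<noteq> {} \<Longrightarrow> \<exists>a. is_cone_point (faces_below \<Delta> lab g) a"
    and "ideal_span n (xmon ` lab ` {v. {v} \<in> \<Delta>}) = (J :: 'k::comm_ring_1 pol set)"
  shows "supports_free_resolution n \<Delta> lab J"
proof -
  have "finite \<Delta>"
    using assms(1,2) by (meson finite_Pow_iff finite_subset)
  then show ?thesis
    unfolding supports_free_resolution_def
    using hbd_exact_if_cones[OF assms(1-4)] augmentation_image assms(5) by blast
qed

subsection \<open>Removing vertices from \<open>M_q^2\<close>\<close>

definition Mverts :: "nat \<Rightarrow> (nat \<times> nat) set" where
  "Mverts q = {(i, j). 1 \<le> i \<and> i \<le> j \<and> j \<le> q}"

definition Mq2_avoiding :: "nat \<Rightarrow> (nat \<times> nat) set \<Rightarrow> (nat \<times> nat) set set" where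
  "Mq2_avoiding q X = {\<tau> \<in> Mq2 q. \<tau> \<inter> X = {}}"

lemma Mset_eq: "Mset q = {(i, j). 1 \<le> i \<and> i < j \<and> j \<le> q}"
proof (intro equalityI subsetI)
  fix u
  assume "u \<in> {(i, j). 1 \<le> i \<and> i < j \<and> j \<le> q}"
  then obtain i j where "u = (i, j)" "1 \<le> i" "i < j" "j \<le> q"
    by blast
  moreover from this have "u = lv i j"
    by (simp add: lv_def)
  ultimately show "u \<in> Mset q"
    unfolding Mset_def by blast
qed (auto simp: Mset_def lv_def)

lemma Mfacet_eq: "Mfacet q i = Mset q \<union> {(i, i)}"
  by (simp add: Mfacet_def lv_def)

lemma Mlab_lv [simp]: "Mlab m (lv i j) = m i + m j"
  by (simp add: Mlab_def lv_def min_def max_def add.commute)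

lemma fst_lv [simp]: "fst (lv i j) = min i j"
  by (simp add: lv_def)

lemma lv_in_Mverts: "i \<in> {1..q} \<Longrightarrow> j \<in> {1..q} \<Longrightarrow> lv i j \<in> Mverts q"
  by (simp add: lv_def Mverts_def)

lemma lv_in_Mset: "i \<in> {1..q} \<Longrightarrow> j \<in> {1..q} \<Longrightarrow> i \<noteq> j \<Longrightarrow> lv i j \<in> Mset q"
  by (auto simp: lv_def Mset_eq min_def max_def)

lemma finite_Mverts: "finite (Mverts q)"
  by (rule finite_subset[of _ "{1..q} \<times> {1..q}"]) (auto simp: Mverts_def)

lemma Mq2_avoiding_subset_Pow: "Mq2_avoiding q X \<subseteq> Pow (Mverts q)"
  by (auto simp: Mq2_avoiding_def Mq2_def Mfacet_eq Mset_eq Mverts_def)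

lemma Mq2_avoiding_subset_closed: "\<tau> \<in> Mq2_avoiding q X \<Longrightarrow> \<sigma> \<subseteq> \<tau> \<Longrightarrow> \<sigma> \<in> Mq2_avoiding q X"
  by (auto simp: Mq2_avoiding_def Mq2_def)

lemma insert_Mset_in_Mq2_avoiding:
  "\<tau> \<in> Mq2_avoiding q X \<Longrightarrow> u \<in> Mset q - X \<Longrightarrow> insert u \<tau> \<in> Mq2_avoiding q X"
  by (auto simp: Mq2_avoiding_def Mq2_def Mfacet_def)

lemma singleton_in_Mq2_avoiding_iff: "{u} \<in> Mq2_avoiding q X \<longleftrightarrow> u \<in> Mverts q - X"
proof
  assume "{u} \<in> Mq2_avoiding q X"
  then show "u \<in> Mverts q - X"
    using Mq2_avoiding_subset_Pow by (auto simp: Mq2_avoiding_def)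
next
  assume u: "u \<in> Mverts q - X"
  then obtain i j where "u = (i, j)" "1 \<le> i" "i \<le> j" "j \<le> q"
    by (auto simp: Mverts_def)
  then have "{u} \<subseteq> Mfacet q (if i = j then i else 1)"
    by (auto simp: Mfacet_eq Mset_eq)
  with u \<open>1 \<le> i\<close> \<open>i \<le> j\<close> \<open>j \<le> q\<close> show "{u} \<in> Mq2_avoiding q X"
    unfolding Mq2_avoiding_def Mq2_def by (auto intro!: bexI[of _ "if i = j then i else 1"])
qed

lemma faces_below_Mq2_avoiding_iff:
  "\<sigma> \<in> faces_below (Mq2_avoiding q X) (Mlab m) g
     \<longleftrightarrow> \<sigma> \<in> Mq2_avoiding q X \<and> (\<forall>v\<in>\<sigma>. mdvd (Mlab m v) g)"
proof -
  have "finite \<sigma>" if "\<sigma> \<in> Mq2_avoiding q X"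
    using that Mq2_avoiding_subset_Pow finite_Mverts by (meson PowD finite_subset subsetD)
  then show ?thesis
    by (auto simp: faces_below_def face_label_mdvd_iff)
qed

lemma faces_below_Mq2_avoiding_subset_closed:
  "\<tau> \<in> faces_below (Mq2_avoiding q X) (Mlab m) g \<Longrightarrow> \<sigma> \<subseteq> \<tau>
     \<Longrightarrow> \<sigma> \<in> faces_below (Mq2_avoiding q X) (Mlab m) g"
  by (meson faces_below_Mq2_avoiding_iff Mq2_avoiding_subset_closed subsetD)

lemma faces_below_Mq2_avoiding_diagonal:
  assumes "\<not> (\<exists>u\<in>Mset q - X. mdvd (Mlab m u) g)"
    and "\<sigma> \<in> faces_below (Mq2_avoiding q X) (Mlab m) g" "v \<in> \<sigma>"
  obtains i where "i \<in> {1..q}" "v = (i, i)" "mdvd (m i + m i) g"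
proof -
  have "{v} \<in> faces_below (Mq2_avoiding q X) (Mlab m) g"
    using assms(2,3) by (auto intro: faces_below_Mq2_avoiding_subset_closed)
  then have v: "v \<in> Mverts q - X" "mdvd (Mlab m v) g"
    by (simp_all add: faces_below_Mq2_avoiding_iff singleton_in_Mq2_avoiding_iff)
  then obtain i j where ij: "v = (i, j)" "1 \<le> i" "i \<le> j" "j \<le> q"
    by (auto simp: Mverts_def)
  from assms(1) v have "v \<notin> Mset q"
    by blast
  with ij have "i = j"
    by (auto simp: Mset_eq)
  with ij v that show ?thesis
    by (auto simp: Mlab_def)
qed

text \<open>If no surviving edge vertex \<open>l_{i,j}\<close> (\<open>i < j\<close>) divides \<open>g\<close>, the faces below \<open>g\<close> consist of
  diagonal vertices only, and the hypothesis on \<open>X\<close> leaves at most one of them.\<close>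

lemma Mq2_avoiding_faces_below_cone:
  assumes edges: "\<And>i j g. i \<in> {1..q} \<Longrightarrow> j \<in> {1..q} \<Longrightarrow> i \<noteq> j \<Longrightarrow> mdvd (m i + m i) g \<Longrightarrow>
      mdvd (m j + m j) g \<Longrightarrow> \<exists>u\<in>Mset q - X. mdvd (Mlab m u) g"
    and "\<exists>\<tau>\<in>faces_below (Mq2_avoiding q X) (Mlab m) g. \<tau> \<noteq> {}"
  shows "\<exists>a. is_cone_point (faces_below (Mq2_avoiding q X) (Mlab m) g) a"
proof (cases "\<exists>u\<in>Mset q - X. mdvd (Mlab m u) g")
  case True
  then obtain u where "u \<in> Mset q - X" "mdvd (Mlab m u) g"
    by blast
  then have "is_cone_point (faces_below (Mq2_avoiding q X) (Mlab m) g) u"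
    by (auto simp: is_cone_point_def faces_below_Mq2_avoiding_iff intro: insert_Mset_in_Mq2_avoiding)
  then show ?thesis
    by blast
next
  case False
  let ?K = "faces_below (Mq2_avoiding q X) (Mlab m) g"
  obtain \<tau> w where \<tau>: "\<tau> \<in> ?K" "w \<in> \<tau>"
    using assms(2) by blast
  have "v = w" if v: "\<sigma> \<in> ?K" "v \<in> \<sigma>" for \<sigma> v
  proof -
    obtain i where "i \<in> {1..q}" "v = (i, i)" "mdvd (m i + m i) g"
      using faces_below_Mq2_avoiding_diagonal[OF False v] by blast
    moreover obtain j where "j \<in> {1..q}" "w = (j, j)" "mdvd (m j + m j) g"
      using faces_below_Mq2_avoiding_diagonal[OF False \<tau>] by blast
    ultimately show "v = w"
      using edges[of i j g] False by (cases "i = j") auto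
  qed
  then have "insert w \<sigma> \<subseteq> \<tau>" if "\<sigma> \<in> ?K" for \<sigma>
    using that \<tau>(2) by blast
  with \<tau>(1) have "is_cone_point ?K w"
    unfolding is_cone_point_def by (blast intro: faces_below_Mq2_avoiding_subset_closed)
  then show ?thesis
    by blast
qed

lemma Mq2_avoiding_supports_free_resolution:
  fixes m :: "nat \<Rightarrow> mon"
  assumes vars: "\<forall>i\<in>{1..q}. mon_in n (m i)"
    and edges: "\<And>i j g. i \<in> {1..q} \<Longrightarrow> j \<in> {1..q} \<Longrightarrow> i \<noteq> j \<Longrightarrow> mdvd (m i + m i) g \<Longrightarrow>
      mdvd (m j + m j) g \<Longrightarrow> \<exists>u\<in>Mset q - X. mdvd (Mlab m u) g"
    and gens: "\<And>i j. i \<in> {1..q} \<Longrightarrow> j \<in> {1..q} \<Longrightarrow> \<exists>u\<in>Mverts q - X. mdvd (Mlab m u) (m i + m j)"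
  defines "I \<equiv> ideal_span n ((\<lambda>i. xmon (m i) :: 'k::comm_ring_1 pol) ` {1..q})"
  shows "supports_free_resolution n (Mq2_avoiding q X) (Mlab m) (ideal_prod n I I)"
proof (rule supports_free_resolution_if_cones[OF finite_Mverts Mq2_avoiding_subset_Pow])
  show "\<forall>v\<in>Mverts q. mon_in n (Mlab m v)"
    using vars by (auto simp: Mverts_def Mlab_def)
  show "\<exists>a. is_cone_point (faces_below (Mq2_avoiding q X) (Mlab m) g) a"
    if "\<exists>\<tau>\<in>faces_below (Mq2_avoiding q X) (Mlab m) g. \<tau> \<noteq> {}" for g
    using edges that by (rule Mq2_avoiding_faces_below_cone)
  let ?P = "{m i + m j | i j. i \<in> {1..q} \<and> j \<in> {1..q}}"
  have "{v. {v} \<in> Mq2_avoiding q X} = Mverts q - X"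
    by (auto simp: singleton_in_Mq2_avoiding_iff)
  moreover have "ideal_span n (xmon ` Mlab m ` (Mverts q - X)) \<subseteq> ideal_span n (xmon ` ?P :: 'k pol set)"
  proof (rule ideal_span_xmon_subset)
    fix a
    assume "a \<in> Mlab m ` (Mverts q - X)"
    then obtain i j where ij: "a = m i + m j" "i \<in> {1..q}" "j \<in> {1..q}"
      by (auto simp: Mverts_def Mlab_def)
    then have "a \<in> ?P"
      by blast
    moreover have "mon_in n a"
      using vars ij by simp
    ultimately show "mon_in n a \<and> (\<exists>b\<in>?P. mdvd b a)"
      using mdvd_refl by blast
  qed
  moreover have "ideal_span n (xmon ` ?P) \<subseteq> ideal_span n (xmon ` Mlab m ` (Mverts q - X) :: 'k pol set)"
  proof (rule ideal_span_xmon_subset)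
    fix a
    assume "a \<in> ?P"
    then obtain i j where "a = m i + m j" "i \<in> {1..q}" "j \<in> {1..q}"
      by blast
    with vars gens[of i j] show "mon_in n a \<and> (\<exists>b\<in>Mlab m ` (Mverts q - X). mdvd b a)"
      by auto
  qed
  ultimately show "ideal_span n (xmon ` Mlab m ` {v. {v} \<in> Mq2_avoiding q X}) = ideal_prod n I I"
    unfolding I_def ideal_prod_monomial_ideal by (intro subset_antisym) simp_all
qed

subsection \<open>The complex \<open>M^2(I)\<close>\<close>

lemma deleted_cases:
  assumes minimal: "\<forall>i\<in>{1..q}. \<forall>j\<in>{1..q}. i \<noteq> j \<longrightarrow> \<not> mdvd (m i) (m j)"
    and "w \<in> deleted q m"
  obtains (strict) u v where "u \<in> {1..q}" "v \<in> {1..q}" "mdvd (m u + m v) (Mlab m w)" "m u + m v \<noteq> Mlab m w"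
    | (tie) u v where "u \<in> {1..q}" "v \<in> {1..q}" "m u + m v = Mlab m w" "fst w < min u v"
proof -
  have inj: "i = j" if "i \<in> {1..q}" "j \<in> {1..q}" "m i = m j" for i j
    using minimal that by fastforce
  from assms(2) consider
      (equal) i j u v where "w = lv i j" "i \<in> {1..q}" "j \<in> {1..q}" "u \<in> {1..q}" "v \<in> {1..q}"
        "{i, j} \<noteq> {u, v}" "m i + m j = m u + m v" "i = Min {i, j, u, v}"
    | (proper) i j u v where "w = lv u v" "i \<in> {1..q}" "j \<in> {1..q}"
        "mdvd (m i + m j) (m u + m v)" "m i + m j \<noteq> m u + m v"
    unfolding deleted_def by blast
  then show ?thesis
  proof cases
    case (equal i j u v)
    then have "i \<le> j" "i \<le> u" "i \<le> v"
      by (metis Min_le finite.emptyI finite.insertI insertCI)+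
    moreover have "i \<noteq> u"
      using equal inj[of j v] by auto
    moreover have "i \<noteq> v"
      using equal inj[of j u] by (auto simp: add.commute)
    ultimately have "fst w < min u v"
      using equal(1) by (simp add: lv_def)
    with equal show ?thesis
      using tie by simp
  next
    case (proper i j u v)
    with strict show ?thesis
      by simp
  qed
qed

text \<open>Pairs are compared by the degree of \<open>m_i m_j\<close> and then by decreasing smaller index:
  a deletion because of equal labels always keeps a pair with a larger smaller index.\<close>

definition pair_key :: "nat \<Rightarrow> (nat \<Rightarrow> mon) \<Rightarrow> nat \<Rightarrow> nat \<Rightarrow> nat \<times> nat" where
  "pair_key q m i j = (mdeg (m i + m j), q - min i j)"

lemma surviving_vertex_below:
  assumes minimal: "\<forall>i\<in>{1..q}. \<forall>j\<in>{1..q}. i \<noteq> j \<longrightarrow> \<not> mdvd (m i) (m j)"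
  shows "i \<in> {1..q} \<Longrightarrow> j \<in> {1..q} \<Longrightarrow> \<exists>w\<in>Mverts q - deleted q m.
    mdvd (Mlab m w) (m i + m j) \<and> (Mlab m w = m i + m j \<longrightarrow> min i j \<le> fst w)"
proof (induction "pair_key q m i j" arbitrary: i j rule: less_induct)
  case less
  show ?case
  proof (cases "lv i j \<in> deleted q m")
    case False
    with less.prems show ?thesis
      by (intro bexI[of _ "lv i j"]) (simp_all add: lv_in_Mverts)
  next
    case True
    with minimal show ?thesis
    proof (cases rule: deleted_cases)
      case (strict u v)
      then have "pair_key q m u v < pair_key q m i j"
        by (simp add: pair_key_def mdeg_strict_mono)
      with strict less.hyps obtain w where w: "w \<in> Mverts q - deleted q m" "mdvd (Mlab m w) (m u + m v)"
        by blast
      with strict have "mdvd (Mlab m w) (m i + m j)" "Mlab m w \<noteq> m i + m j"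
        by (auto intro: mdvd_trans dest: mdvd_antisym)
      with w(1) show ?thesis
        by blast
    next
      case (tie u v)
      then have "min i j < min u v" "min u v \<le> q"
        by auto
      then have "q - min u v < q - min i j"
        by (intro diff_less_mono2) auto
      with tie have "pair_key q m u v < pair_key q m i j"
        by (simp add: pair_key_def)
      with tie less.hyps obtain w where "w \<in> Mverts q - deleted q m" "mdvd (Mlab m w) (m u + m v)"
        "Mlab m w = m u + m v \<longrightarrow> min u v \<le> fst w"
        by blast
      with tie \<open>min i j < min u v\<close> show ?thesis
        by auto
    qed
  qed
qed

text \<open>If \<open>m_k^2\<close> divides \<open>m_x m_y\<close>, replacing \<open>x\<close> or \<open>y\<close> by \<open>k\<close> lowers the key: otherwise all three
  generators have the same degree, \<open>m_k^2 = m_x m_y\<close>, and the tie condition moves the smaller index up.\<close>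

lemma pair_key_decreases:
  assumes kk: "mdvd (m k + m k) (m x + m y)" and "x \<noteq> y" "k \<noteq> x" "k \<noteq> y" "k \<le> q"
    and tie: "m k + m k = m x + m y \<Longrightarrow> min x y \<le> k"
  shows "pair_key q m x k < pair_key q m x y \<or> pair_key q m y k < pair_key q m x y"
proof (rule ccontr)
  assume not_less: "\<not> ?thesis"
  then have "mdeg (m x + m y) \<le> mdeg (m x + m k)" "mdeg (m x + m y) \<le> mdeg (m y + m k)"
    by (auto simp: pair_key_def)
  moreover have "mdeg (m k + m k) \<le> mdeg (m x + m y)"
    using kk by (rule mdeg_mono)
  ultimately have deg: "mdeg (m x) = mdeg (m k)" "mdeg (m y) = mdeg (m k)"
    by (simp_all add: mdeg_add)
  then have "m k + m k = m x + m y"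
    using kk by (intro mdvd_mdeg_eq) (simp_all add: mdeg_add)
  with tie assms(2-5) have "q - min (max x y) k < q - min x y"
    by auto
  moreover have "mdeg (m (max x y)) = mdeg (m k)"
    using deg by (simp add: max_def)
  ultimately have "pair_key q m (max x y) k < pair_key q m x y"
    using deg by (simp add: pair_key_def mdeg_add)
  with not_less show False
    by (simp add: max_def split: if_splits)
qed

lemma surviving_edge_below:
  assumes minimal: "\<forall>i\<in>{1..q}. \<forall>j\<in>{1..q}. i \<noteq> j \<longrightarrow> \<not> mdvd (m i) (m j)"
  shows "x \<in> {1..q} \<Longrightarrow> y \<in> {1..q} \<Longrightarrow> x \<noteq> y \<Longrightarrow> mdvd (m x + m x) g \<Longrightarrow> mdvd (m y + m y) g
    \<Longrightarrow> \<exists>u\<in>Mset q - deleted q m. mdvd (Mlab m u) g"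
proof (induction "pair_key q m x y" arbitrary: x y rule: less_induct)
  case less
  have xy: "mdvd (m x + m y) g"
    using less.prems(4,5) by (rule mdvd_add_if_doubles)
  obtain w where w: "w \<in> Mverts q - deleted q m" "mdvd (Mlab m w) (m x + m y)"
    "Mlab m w = m x + m y \<longrightarrow> min x y \<le> fst w"
    using surviving_vertex_below[OF minimal less.prems(1,2)] by blast
  show ?case
  proof (cases "w \<in> Mset q")
    case True
    with w xy show ?thesis
      by (blast intro: mdvd_trans)
  next
    case False
    from w(1) obtain k l where "w = (k, l)" "1 \<le> k" "k \<le> l" "l \<le> q"
      by (auto simp: Mverts_def)
    with False have k: "w = (k, k)" "k \<in> {1..q}"
      by (auto simp: Mset_eq)
    with w have kk: "mdvd (m k + m k) (m x + m y)" and tie: "m k + m k = m x + m y \<Longrightarrow> min x y \<le> k"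
      by (simp_all add: Mlab_def)
    have "\<not> mdvd (m x) (m y)" "\<not> mdvd (m y) (m x)"
      using minimal less.prems(1-3) by auto
    then have "k \<noteq> x" "k \<noteq> y"
      using kk mdvd_cancel_double[of "m x" "m y"] mdvd_cancel_double[of "m y" "m x"]
      by (auto simp: add.commute)
    moreover have "mdvd (m k + m k) g"
      using kk xy by (rule mdvd_trans)
    moreover have "pair_key q m x k < pair_key q m x y \<or> pair_key q m y k < pair_key q m x y"
      using kk less.prems(3) \<open>k \<noteq> x\<close> \<open>k \<noteq> y\<close> k(2) tie by (intro pair_key_decreases) auto
    ultimately show ?thesis
      using less.hyps less.prems k(2) by metis
  qed
qed

lemma Mq2_supports_free_resolution:
  fixes m :: "nat \<Rightarrow> mon"
  assumes vars: "\<forall>i\<in>{1..q}. mon_in n (m i)"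
  defines "I \<equiv> ideal_span n ((\<lambda>i. xmon (m i) :: 'k::comm_ring_1 pol) ` {1..q})"
  shows "supports_free_resolution n (Mq2 q) (Mlab m) (ideal_prod n I I)"
proof -
  have "supports_free_resolution n (Mq2_avoiding q {}) (Mlab m) (ideal_prod n I I)"
    unfolding I_def
  proof (rule Mq2_avoiding_supports_free_resolution[OF vars])
    show "\<exists>u\<in>Mset q - {}. mdvd (Mlab m u) g"
      if "i \<in> {1..q}" "j \<in> {1..q}" "i \<noteq> j" "mdvd (m i + m i) g" "mdvd (m j + m j) g" for i j g
      using that by (intro bexI[of _ "lv i j"]) (simp_all add: mdvd_add_if_doubles lv_in_Mset)
    show "\<exists>u\<in>Mverts q - {}. mdvd (Mlab m u) (m i + m j)" if "i \<in> {1..q}" "j \<in> {1..q}" for i j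
      using that lv_in_Mverts[of i q j] by force
  qed
  moreover have "Mq2 q = Mq2_avoiding q {}"
    by (simp add: Mq2_avoiding_def)
  ultimately show ?thesis
    by simp
qed

lemma M2I_supports_free_resolution:
  fixes m :: "nat \<Rightarrow> mon"
  assumes vars: "\<forall>i\<in>{1..q}. mon_in n (m i)"
    and minimal: "\<forall>i\<in>{1..q}. \<forall>j\<in>{1..q}. i \<noteq> j \<longrightarrow> \<not> mdvd (m i) (m j)"
  defines "I \<equiv> ideal_span n ((\<lambda>i. xmon (m i) :: 'k::comm_ring_1 pol) ` {1..q})"
  shows "supports_free_resolution n (M2I q m) (Mlab m) (ideal_prod n I I)"
proof -
  have "supports_free_resolution n (Mq2_avoiding q (deleted q m)) (Mlab m) (ideal_prod n I I)"
    unfolding I_def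
    using surviving_edge_below[OF minimal] surviving_vertex_below[OF minimal]
    by (intro Mq2_avoiding_supports_free_resolution[OF vars]) blast+
  moreover have "M2I q m = Mq2_avoiding q (deleted q m)"
    by (simp add: M2I_def Mq2_avoiding_def)
  ultimately show ?thesis
    by simp
qed

theorem theorem1:
  fixes n q :: nat and m :: "nat \<Rightarrow> mon"
  assumes vars: "\<forall>i\<in>{1..q}. mon_in n (m i)"
      and minimal: "\<forall>i\<in>{1..q}. \<forall>j\<in>{1..q}. i \<noteq> j \<longrightarrow> \<not> mdvd (m i) (m j)"
  defines "I \<equiv> ideal_span n ((\<lambda>i. xmon (m i) :: 'k::field pol) ` {1..q})"
  shows "supports_free_resolution n (Mq2 q) (Mlab m) (ideal_prod n I I)
       \<and> supports_free_resolution n (M2I q m) (Mlab m) (ideal_prod n I I)"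
  unfolding I_def
  using Mq2_supports_free_resolution[OF vars] M2I_supports_free_resolution[OF vars minimal] by blast

end
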